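(* If $G$ is a BDH graph (with no universal vertex), then the poset $(\mathcal{B}(G),\preceq)$ of its maximal bicliques has order dimension at most $3$.
   Context: For a bipartite graph with color classes $X,Y$, a biclique is a vertex set inducing a complete bipartite subgraph with shores $X(B)=B\cap X$, $Y(B)=B\cap Y$; $\mathcal{B}(G)$ is the set of maximal bicliques, ordered by $B\preceq B'\iff X(B)\subseteq X(B')$. A graph is distance hereditary if distances in every connected induced subgraph equal distances in the graph; BDH means bipartite distance hereditary. A universal vertex is adjacent to all vertices of the opposite color class. The order dimension of a poset is the least number of linear orders whose intersection is the poset's order. *)

theory Defs
  imports Main "HOL-Library.Extended_Nat"
begin

definition simple_graph :: "'a set \<Rightarrow> ('a \<Rightarrow> 'a \<Rightarrow> bool) \<Rightarrow> bool" where
  "simple_graph V E \<longleftrightarrow> finite V \<and> (\<forall>u v. E u v \<longrightarrow> u \<in> V \<and> v \<in> V)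
     \<and> (\<forall>u v. E u v \<longrightarrow> E v u) \<and> (\<forall>v. \<not> E v v)"

definition bipartite_graph :: "'a set \<Rightarrow> 'a set \<Rightarrow> ('a \<Rightarrow> 'a \<Rightarrow> bool) \<Rightarrow> bool" where
  "bipartite_graph X Y E \<longleftrightarrow> simple_graph (X \<union> Y) E \<and> X \<inter> Y = {}
     \<and> (\<forall>u v. E u v \<longrightarrow> (u \<in> X \<and> v \<in> Y) \<or> (u \<in> Y \<and> v \<in> X))"

definition walk_in :: "('a \<Rightarrow> 'a \<Rightarrow> bool) \<Rightarrow> 'a set \<Rightarrow> 'a list \<Rightarrow> bool" where
  "walk_in E S xs \<longleftrightarrow> xs \<noteq> [] \<and> set xs \<subseteq> S
     \<and> (\<forall>i. Suc i < length xs \<longrightarrow> E (xs ! i) (xs ! Suc i))"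

text \<open>Distance in the induced subgraph G[S] (infinite if no walk exists).\<close>
definition dist_in :: "('a \<Rightarrow> 'a \<Rightarrow> bool) \<Rightarrow> 'a set \<Rightarrow> 'a \<Rightarrow> 'a \<Rightarrow> enat" where
  "dist_in E S u v = (INF xs \<in> {xs. walk_in E S xs \<and> hd xs = u \<and> last xs = v}.
                         enat (length xs - 1))"

definition connected_in :: "('a \<Rightarrow> 'a \<Rightarrow> bool) \<Rightarrow> 'a set \<Rightarrow> bool" where
  "connected_in E S \<longleftrightarrow> (\<forall>u\<in>S. \<forall>v\<in>S. \<exists>xs. walk_in E S xs \<and> hd xs = u \<and> last xs = v)"

definition distance_hereditary :: "'a set \<Rightarrow> ('a \<Rightarrow> 'a \<Rightarrow> bool) \<Rightarrow> bool" where
  "distance_hereditary V E \<longleftrightarrow>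
     (\<forall>S. S \<subseteq> V \<and> connected_in E S \<longrightarrow>
        (\<forall>u\<in>S. \<forall>v\<in>S. dist_in E S u v = dist_in E V u v))"

definition BDH :: "'a set \<Rightarrow> 'a set \<Rightarrow> ('a \<Rightarrow> 'a \<Rightarrow> bool) \<Rightarrow> bool" where
  "BDH X Y E \<longleftrightarrow> bipartite_graph X Y E \<and> distance_hereditary (X \<union> Y) E"

definition has_universal_vertex :: "'a set \<Rightarrow> 'a set \<Rightarrow> ('a \<Rightarrow> 'a \<Rightarrow> bool) \<Rightarrow> bool" where
  "has_universal_vertex X Y E \<longleftrightarrow>
     (\<exists>x\<in>X. \<forall>y\<in>Y. E x y) \<or> (\<exists>y\<in>Y. \<forall>x\<in>X. E y x)"

text \<open>Biclique: a vertex set inducing a complete bipartite subgraph with shores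
  B \<inter> X and B \<inter> Y (shores may be empty).\<close>
definition biclique :: "'a set \<Rightarrow> 'a set \<Rightarrow> ('a \<Rightarrow> 'a \<Rightarrow> bool) \<Rightarrow> 'a set \<Rightarrow> bool" where
  "biclique X Y E B \<longleftrightarrow> B \<subseteq> X \<union> Y \<and> (\<forall>x\<in>B \<inter> X. \<forall>y\<in>B \<inter> Y. E x y)"

definition max_bicliques :: "'a set \<Rightarrow> 'a set \<Rightarrow> ('a \<Rightarrow> 'a \<Rightarrow> bool) \<Rightarrow> 'a set set" where
  "max_bicliques X Y E = {B. biclique X Y E B \<and>
      (\<forall>B'. biclique X Y E B' \<and> B \<subseteq> B' \<longrightarrow> B' = B)}"

definition biclique_order :: "'a set \<Rightarrow> 'a set \<Rightarrow> ('a \<Rightarrow> 'a \<Rightarrow> bool) \<Rightarrow> ('a set \<times> 'a set) set" where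
  "biclique_order X Y E = {(B, B'). B \<in> max_bicliques X Y E \<and> B' \<in> max_bicliques X Y E
       \<and> B \<inter> X \<subseteq> B' \<inter> X}"

definition realizer :: "'b set \<Rightarrow> ('b \<times> 'b) set \<Rightarrow> ('b \<times> 'b) set set \<Rightarrow> bool" where
  "realizer A P R \<longleftrightarrow> (\<forall>L\<in>R. linear_order_on A L) \<and> \<Inter>R = P"

definition order_dimension :: "'b set \<Rightarrow> ('b \<times> 'b) set \<Rightarrow> nat" where
  "order_dimension A P = (LEAST k. \<exists>R. finite R \<and> card R = k \<and> realizer A P R)"

end

theory Submission
  imports Defs "HOL-Library.Product_Lexorder"
begin

text \<open>A bipartite distance-hereditary graph can be dismantled by repeatedly deleting an isolated
  vertex, a pendant vertex or one of two twins; a vertex of minimum degree in the last layer of a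
  breadth-first search supplies one. Reversing this pruning sequence, the vertices can be placed in
  \<int> \<times> \<int> \<times> \<int> so that a vertex of X lies above a vertex of Y in every coordinate exactly when the
  two are adjacent, while all other pairs are incomparable. Each coordinate then ranks the vertices,
  and sorting the maximal bicliques by the minimum rank of their X-shore yields three linear
  extensions of the biclique order whose intersection is that order.\<close>

section \<open>Maximal bicliques and linear extensions\<close>

lemma max_bicliques_biclique: "B \<in> max_bicliques X Y E \<Longrightarrow> biclique X Y E B"
  by (simp add: max_bicliques_def)

lemma max_bicliques_subset: "B \<in> max_bicliques X Y E \<Longrightarrow> B \<subseteq> X \<union> Y"
  by (simp add: max_bicliques_def biclique_def)

lemma max_bicliques_eqI:
  assumes B: "B \<in> max_bicliques X Y E" and B': "B' \<in> max_bicliques X Y E"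
    and shores: "B \<inter> X = B' \<inter> X"
  shows "B = B'"
proof -
  have "biclique X Y E (B \<union> B')"
    using max_bicliques_biclique[OF B] max_bicliques_biclique[OF B'] shores
    unfolding biclique_def by blast
  then have "B \<union> B' = B" "B \<union> B' = B'"
    using B B' unfolding max_bicliques_def by blast+
  then show ?thesis by simp
qed

lemma max_bicliques_non_neighbour:
  assumes B: "B \<in> max_bicliques X Y E" and "x \<in> X" "x \<notin> B" "X \<inter> Y = {}"
  shows "\<exists>y\<in>B \<inter> Y. \<not> E x y"
proof (rule ccontr)
  assume "\<not> ?thesis"
  then have "biclique X Y E (insert x B)"
    using assms max_bicliques_biclique[OF B] unfolding biclique_def by blast
  then have "insert x B = B" using B unfolding max_bicliques_def by blast
  with \<open>x \<notin> B\<close> show False by blast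
qed

lemma linear_order_on_key:
  fixes key :: "'b \<Rightarrow> 'c::linorder"
  assumes "inj_on key A"
  shows "linear_order_on A {(C, C'). C \<in> A \<and> C' \<in> A \<and> key C \<le> key C'}"
  using assms
  unfolding linear_order_on_def partial_order_on_def preorder_on_def
    refl_on_def trans_def antisym_def total_on_def inj_on_def
  by auto

text \<open>Sorting maximal bicliques by this key (for a ranking f of the vertices) gives a linear
  extension of the biclique order; M is a default for an empty X-shore and h breaks the remaining
  ties.\<close>
definition shore_key ::
    "'a set \<Rightarrow> int \<Rightarrow> ('a set \<Rightarrow> nat) \<Rightarrow> ('a \<Rightarrow> int) \<Rightarrow> 'a set \<Rightarrow> int \<times> nat \<times> nat" where
  "shore_key X M h f C = (M - Min (insert M (f ` (C \<inter> X))), card (C \<inter> X), h C)"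

lemma shore_key_mono:
  assumes "finite X" and B: "B \<in> max_bicliques X Y E" and B': "B' \<in> max_bicliques X Y E"
    and "B \<inter> X \<subseteq> B' \<inter> X"
  shows "shore_key X M h f B \<le> shore_key X M h f B'"
proof -
  have fin: "finite (C \<inter> X)" for C using assms(1) by simp
  have "Min (insert M (f ` (B' \<inter> X))) \<le> Min (insert M (f ` (B \<inter> X)))"
    using assms(4) fin by (intro Min_antimono) auto
  moreover have "card (B \<inter> X) \<le> card (B' \<inter> X)" using assms(4) fin by (intro card_mono) auto
  moreover have "B = B'" if "card (B \<inter> X) = card (B' \<inter> X)"
    using card_subset_eq[OF fin assms(4)] that max_bicliques_eqI[OF B B'] by simp
  ultimately show ?thesis
    unfolding shore_key_def by (auto simp: less_eq_prod_def le_less)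
qed

lemma shore_key_less:
  assumes "finite X" and "x \<in> B \<inter> X" "f x < f y" "f y < M"
    and "\<And>x'. x' \<in> B' \<inter> X \<Longrightarrow> f y < f x'"
  shows "shore_key X M h f B' < shore_key X M h f B"
proof -
  have "f y < Min (insert M (f ` (B' \<inter> X)))" using assms(1,4,5) by simp
  moreover have "Min (insert M (f ` (B \<inter> X))) \<le> f x" using assms(1,2) by (intro Min_le) auto
  ultimately show ?thesis using assms(3) unfolding shore_key_def by simp
qed

text \<open>Every incomparable pair B, B' is reversed by some ranking: an x in the X-shore of B but not
  of B' misses some y in the Y-shore of B', and a ranking putting x below y puts B above B'.\<close>
lemma order_dimension_le_rankings:
  fixes fs :: "('a \<Rightarrow> int) list"
  assumes fin: "finite (X \<union> Y)" and disj: "X \<inter> Y = {}" and "fs \<noteq> []"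
    and edge: "\<And>f x y. f \<in> set fs \<Longrightarrow> x \<in> X \<Longrightarrow> y \<in> Y \<Longrightarrow> E x y \<Longrightarrow> f y < f x"
    and non_edge: "\<And>x y. x \<in> X \<Longrightarrow> y \<in> Y \<Longrightarrow> \<not> E x y \<Longrightarrow> \<exists>f\<in>set fs. f x < f y"
  shows "order_dimension (max_bicliques X Y E) (biclique_order X Y E) \<le> length fs"
proof -
  define MB where "MB = max_bicliques X Y E"
  have "finite MB"
    using fin max_bicliques_subset unfolding MB_def by (meson Pow_iff finite_Pow_iff finite_subset subsetI)
  then obtain h :: "'a set \<Rightarrow> nat" where h: "inj_on h MB"
    using finite_imp_inj_to_nat_seg[of MB] by blast
  define M where "M = Max (insert 0 (\<Union>f\<in>set fs. f ` (X \<union> Y))) + 1"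
  have M: "f v < M" if "f \<in> set fs" "v \<in> X \<union> Y" for f v
  proof -
    have "f v \<le> Max (insert 0 (\<Union>f\<in>set fs. f ` (X \<union> Y)))"
      using fin that by (intro Max_ge) auto
    then show ?thesis unfolding M_def by simp
  qed
  define L where "L f = {(C, C'). C \<in> MB \<and> C' \<in> MB \<and> shore_key X M h f C \<le> shore_key X M h f C'}"
    for f
  have "linear_order_on MB (L f)" for f
    unfolding L_def using h by (intro linear_order_on_key) (auto simp: shore_key_def inj_on_def)
  moreover have "biclique_order X Y E \<subseteq> L f" for f
  proof
    fix p assume "p \<in> biclique_order X Y E"
    then obtain B B' where "p = (B, B')" "B \<in> MB" "B' \<in> MB" "B \<inter> X \<subseteq> B' \<inter> X"
      unfolding biclique_order_def MB_def by blast
    with shore_key_mono[of X B Y E B'] fin show "p \<in> L f" unfolding L_def MB_def by simp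
  qed
  moreover have "(\<Inter>f\<in>set fs. L f) \<subseteq> biclique_order X Y E"
  proof
    fix p assume p_in: "p \<in> (\<Inter>f\<in>set fs. L f)"
    then obtain B B' where p: "p = (B, B')" "B \<in> MB" "B' \<in> MB"
      using \<open>fs \<noteq> []\<close> unfolding L_def by (cases fs) auto
    show "p \<in> biclique_order X Y E"
    proof (rule ccontr)
      assume "p \<notin> biclique_order X Y E"
      then obtain x where x: "x \<in> B \<inter> X" "x \<notin> B'"
        using p unfolding biclique_order_def MB_def by blast
      obtain y where y: "y \<in> B' \<inter> Y" "\<not> E x y"
        using max_bicliques_non_neighbour[OF _ _ x(2) disj] x(1) p(3) unfolding MB_def by blast
      obtain f where f: "f \<in> set fs" "f x < f y" using non_edge[OF _ _ y(2)] x(1) y(1) by blast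
      have "f y < f x'" if "x' \<in> B' \<inter> X" for x'
        using that edge[OF f(1)] y(1) max_bicliques_biclique p(3) unfolding MB_def biclique_def by blast
      moreover have "finite X" "f y < M" using fin M[OF f(1)] y(1) by auto
      ultimately have "shore_key X M h f B' < shore_key X M h f B"
        using shore_key_less[OF _ x(1) f(2)] by blast
      then show False using p_in f p unfolding L_def by auto
    qed
  qed
  ultimately have "realizer MB (biclique_order X Y E) (L ` set fs)"
    unfolding realizer_def using \<open>fs \<noteq> []\<close> by blast
  then have "order_dimension MB (biclique_order X Y E) \<le> card (L ` set fs)"
    unfolding order_dimension_def by (intro Least_le) blast
  also have "\<dots> \<le> length fs"
    using card_image_le card_length le_trans by blast
  finally show ?thesis unfolding MB_def .
qed

section \<open>Walks and distances in induced subgraphs\<close>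

lemma walk_in_iff: "walk_in E S xs \<longleftrightarrow> xs \<noteq> [] \<and> set xs \<subseteq> S \<and> successively E xs"
  unfolding walk_in_def successively_conv_nth by blast

lemma walk_in_mono: "walk_in E S xs \<Longrightarrow> S \<subseteq> T \<Longrightarrow> walk_in E T xs"
  unfolding walk_in_def by auto

lemma walk_in_rev:
  assumes "walk_in E S xs" "\<And>u w. E u w \<Longrightarrow> E w u"
  shows "walk_in E S (rev xs)"
  using assms by (auto simp: walk_in_iff intro: successively_mono)

lemma walk_in_take: "walk_in E S xs \<Longrightarrow> 0 < n \<Longrightarrow> walk_in E S (take n xs)"
  using successively_append_iff[of E "take n xs" "drop n xs"] set_take_subset[of n xs]
  by (auto simp: walk_in_iff)

lemma walk_in_drop: "walk_in E S xs \<Longrightarrow> n < length xs \<Longrightarrow> walk_in E S (drop n xs)"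
  using successively_append_iff[of E "take n xs" "drop n xs"] set_drop_subset[of n xs]
  by (auto simp: walk_in_iff)

lemma connected_in_walk_set:
  assumes walk: "walk_in E S xs" and sym: "\<And>u w. E u w \<Longrightarrow> E w u"
  shows "connected_in E (set xs)"
  unfolding connected_in_def
proof (intro ballI)
  have W: "walk_in E (set xs) xs" using walk unfolding walk_in_def by auto
  have segment: "\<exists>ys. walk_in E (set xs) ys \<and> hd ys = xs ! i \<and> last ys = xs ! j"
    if "i \<le> j" "j < length xs" for i j
  proof (intro exI conjI)
    let ?ys = "drop i (take (Suc j) xs)"
    show "walk_in E (set xs) ?ys" using that by (intro walk_in_drop walk_in_take W) auto
    show "hd ?ys = xs ! i" using that by (simp add: hd_drop_conv_nth)
    show "last ?ys = xs ! j" using that by (simp add: take_Suc_conv_app_nth)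
  qed
  fix p q assume "p \<in> set xs" "q \<in> set xs"
  then obtain i j where ij: "i < length xs" "j < length xs" "p = xs ! i" "q = xs ! j"
    by (auto simp: in_set_conv_nth)
  show "\<exists>ys. walk_in E (set xs) ys \<and> hd ys = p \<and> last ys = q"
  proof (cases "i \<le> j")
    case True then show ?thesis using segment ij by blast
  next
    case False
    then obtain ys where ys: "walk_in E (set xs) ys" "hd ys = q" "last ys = p"
      using segment[of j i] ij by auto
    moreover have "walk_in E (set xs) (rev ys)" using walk_in_rev[OF ys(1) sym] .
    moreover have "ys \<noteq> []" using ys(1) by (simp add: walk_in_def)
    ultimately show ?thesis by (auto simp: hd_rev last_rev)
  qed
qed

lemma dist_in_le_walk:
  assumes "walk_in E S xs" "hd xs = p" "last xs = q"
  shows "dist_in E S p q \<le> enat (length xs - 1)"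
  unfolding dist_in_def using assms by (intro INF_lower) blast

lemma dist_in_mono: "S \<subseteq> T \<Longrightarrow> dist_in E T p q \<le> dist_in E S p q"
  unfolding dist_in_def by (rule INF_superset_mono) (auto intro: walk_in_mono)

lemma dist_in_ge_potential:
  fixes \<phi> :: "'a \<Rightarrow> int"
  assumes lipschitz: "\<And>a b. a \<in> S \<Longrightarrow> b \<in> S \<Longrightarrow> E a b \<Longrightarrow> \<phi> b \<le> \<phi> a + 1"
    and gap: "int m \<le> \<phi> q - \<phi> p"
  shows "enat m \<le> dist_in E S p q"
  unfolding dist_in_def
proof (rule INF_greatest)
  fix xs assume "xs \<in> {xs. walk_in E S xs \<and> hd xs = p \<and> last xs = q}"
  then have xs: "xs \<noteq> []" "set xs \<subseteq> S" "successively E xs" "hd xs = p" "last xs = q"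
    by (auto simp: walk_in_iff)
  have "\<phi> (xs ! j) \<le> \<phi> (xs ! 0) + int j" if "j < length xs" for j
    using that
  proof (induction j)
    case (Suc j)
    then have "\<phi> (xs ! Suc j) \<le> \<phi> (xs ! j) + 1"
      using xs(2) successively_nth[OF xs(3)] by (intro lipschitz) auto
    with Suc show ?case by simp
  qed simp
  from this[of "length xs - 1"] have "\<phi> q \<le> \<phi> p + int (length xs - 1)"
    using xs by (simp add: hd_conv_nth last_conv_nth)
  with gap show "enat m \<le> enat (length xs - 1)" by simp
qed

lemma distance_hereditary_subset:
  assumes "distance_hereditary V E" "V' \<subseteq> V"
  shows "distance_hereditary V' E"
  unfolding distance_hereditary_def
proof (intro allI impI ballI)
  fix S u w assume S: "S \<subseteq> V' \<and> connected_in E S" "u \<in> S" "w \<in> S"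
  then have "dist_in E S u w = dist_in E V u w"
    using assms unfolding distance_hereditary_def by blast
  moreover have "dist_in E V u w \<le> dist_in E V' u w" "dist_in E V' u w \<le> dist_in E S u w"
    using S assms(2) by (simp_all add: dist_in_mono)
  ultimately show "dist_in E S u w = dist_in E V' u w" by simp
qed

lemma distance_hereditary_walk_set:
  assumes "distance_hereditary V E" "walk_in E V xs" "\<And>u w. E u w \<Longrightarrow> E w u"
    and "p \<in> set xs" "q \<in> set xs"
  shows "dist_in E (set xs) p q = dist_in E V p q"
  using assms connected_in_walk_set[OF assms(2,3)]
  unfolding distance_hereditary_def walk_in_def by blast

section \<open>Distance layers in bipartite graphs\<close>

locale induced_bipartite =
  fixes X Y :: "'a set" and E :: "'a \<Rightarrow> 'a \<Rightarrow> bool"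
  assumes finite_vertices: "finite (X \<union> Y)"
    and disjoint: "X \<inter> Y = {}"
    and sym: "E u w \<Longrightarrow> E w u"
    and edge_between:
      "u \<in> X \<union> Y \<Longrightarrow> w \<in> X \<union> Y \<Longrightarrow> E u w \<Longrightarrow> (u \<in> X \<and> w \<in> Y) \<or> (u \<in> Y \<and> w \<in> X)"
begin

definition reachable :: "'a \<Rightarrow> 'a \<Rightarrow> bool" where
  "reachable r t \<longleftrightarrow> (\<exists>xs. walk_in E (X \<union> Y) xs \<and> hd xs = r \<and> last xs = t)"

definition gdist :: "'a \<Rightarrow> 'a \<Rightarrow> nat" where
  "gdist r t = (LEAST n. \<exists>xs. walk_in E (X \<union> Y) xs \<and> hd xs = r \<and> last xs = t \<and> length xs = Suc n)"

definition nbhd :: "'a \<Rightarrow> 'a set" where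
  "nbhd t = {w \<in> X \<union> Y. E t w}"

lemma finite_nbhd: "finite (nbhd t)"
  using finite_vertices unfolding nbhd_def by simp

lemma geodesic_exists:
  assumes "reachable r t"
  obtains xs where "walk_in E (X \<union> Y) xs" "hd xs = r" "last xs = t" "length xs = Suc (gdist r t)"
proof -
  obtain xs where xs: "walk_in E (X \<union> Y) xs" "hd xs = r" "last xs = t"
    using assms unfolding reachable_def by blast
  then have "length xs = Suc (length xs - 1)" unfolding walk_in_def by auto
  with xs have "\<exists>n xs. walk_in E (X \<union> Y) xs \<and> hd xs = r \<and> last xs = t \<and> length xs = Suc n" by blast
  then have "\<exists>xs. walk_in E (X \<union> Y) xs \<and> hd xs = r \<and> last xs = t \<and> length xs = Suc (gdist r t)"
    unfolding gdist_def by (rule LeastI_ex)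
  with that show ?thesis by blast
qed

lemma gdist_le_walk:
  assumes "walk_in E (X \<union> Y) xs" "hd xs = r" "last xs = t"
  shows "gdist r t \<le> length xs - 1"
proof -
  have "length xs = Suc (length xs - 1)" using assms unfolding walk_in_def by auto
  with assms show ?thesis unfolding gdist_def by (intro Least_le) blast
qed

lemma reachable_in_vertices: "reachable r t \<Longrightarrow> t \<in> X \<union> Y"
  unfolding reachable_def walk_in_def using last_in_set by blast

lemma reachable_refl: "r \<in> X \<union> Y \<Longrightarrow> reachable r r"
  unfolding reachable_def by (intro exI[of _ "[r]"]) (simp add: walk_in_def)

lemma gdist_self: "r \<in> X \<union> Y \<Longrightarrow> gdist r r = 0"
  using gdist_le_walk[of "[r]" r r] by (simp add: walk_in_def)

lemma reachable_step:
  assumes "reachable r t" "E t s" "s \<in> X \<union> Y"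
  shows "reachable r s" "gdist r s \<le> gdist r t + 1"
proof -
  obtain xs where xs: "walk_in E (X \<union> Y) xs" "hd xs = r" "last xs = t" "length xs = Suc (gdist r t)"
    using geodesic_exists[OF assms(1)] .
  then have walk: "walk_in E (X \<union> Y) (xs @ [s])" "hd (xs @ [s]) = r"
    using assms(2,3) by (auto simp: walk_in_iff successively_append_iff)
  then show "reachable r s" unfolding reachable_def by force
  show "gdist r s \<le> gdist r t + 1" using gdist_le_walk[OF walk] xs(4) by simp
qed

lemma gdist_walk_nth:
  assumes "walk_in E (X \<union> Y) xs" "hd xs = r" "j < length xs"
  shows "reachable r (xs ! j)" "gdist r (xs ! j) \<le> j"
proof -
  have walk: "walk_in E (X \<union> Y) (take (Suc j) xs)" using walk_in_take[OF assms(1)] by simp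
  moreover have "hd (take (Suc j) xs) = r" using assms(2) by simp
  moreover have "last (take (Suc j) xs) = xs ! j" using assms(3) by (simp add: take_Suc_conv_app_nth)
  ultimately show "reachable r (xs ! j)" "gdist r (xs ! j) \<le> j"
    unfolding reachable_def using gdist_le_walk[OF walk] assms(3) by auto
qed

lemma gdist_eq_0: "reachable r t \<Longrightarrow> gdist r t = 0 \<Longrightarrow> t = r"
  by (erule geodesic_exists) (auto simp: length_Suc_conv)

lemma walk_nth_in_X_iff:
  assumes "walk_in E (X \<union> Y) xs" "j < length xs"
  shows "xs ! j \<in> X \<longleftrightarrow> (xs ! 0 \<in> X \<longleftrightarrow> even j)"
  using assms(2)
proof (induction j)
  case (Suc j)
  have "xs ! j \<in> set xs" "xs ! Suc j \<in> set xs" using Suc.prems by simp_all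
  then have "E (xs ! j) (xs ! Suc j)" "xs ! j \<in> X \<union> Y" "xs ! Suc j \<in> X \<union> Y"
    using assms(1) Suc.prems unfolding walk_in_def by blast+
  then have "xs ! Suc j \<in> X \<longleftrightarrow> xs ! j \<notin> X" using edge_between disjoint by blast
  then show ?case using Suc by simp
qed simp

lemma reachable_in_X_iff:
  assumes "reachable r t"
  shows "t \<in> X \<longleftrightarrow> (r \<in> X \<longleftrightarrow> even (gdist r t))"
proof -
  obtain xs where xs: "walk_in E (X \<union> Y) xs" "hd xs = r" "last xs = t" "length xs = Suc (gdist r t)"
    using geodesic_exists[OF assms] .
  then have "xs ! 0 = r" "xs ! gdist r t = t"
    by (auto simp: hd_conv_nth last_conv_nth simp flip: length_greater_0_conv)
  then show ?thesis using walk_nth_in_X_iff[OF xs(1), of "gdist r t"] xs(4) by simp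
qed

lemma gdist_adjacent_neq:
  assumes "reachable r s" "reachable r t" "E s t"
  shows "gdist r s \<noteq> gdist r t"
proof
  assume "gdist r s = gdist r t"
  then have "s \<in> X \<longleftrightarrow> t \<in> X" using reachable_in_X_iff assms(1,2) by simp
  moreover have "s \<in> X \<union> Y" "t \<in> X \<union> Y" using reachable_in_vertices assms by auto
  ultimately show False using edge_between[OF _ _ assms(3)] disjoint by blast
qed

lemma gdist_adjacent:
  assumes "reachable r s" "E s t" "t \<in> X \<union> Y"
  shows "reachable r t" "gdist r t = gdist r s + 1 \<or> gdist r s = gdist r t + 1"
proof -
  show t: "reachable r t" using reachable_step[OF assms] by blast
  have "gdist r s \<le> gdist r t + 1"
    using reachable_step[OF t sym[OF assms(2)] reachable_in_vertices[OF assms(1)]] by blast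
  then show "gdist r t = gdist r s + 1 \<or> gdist r s = gdist r t + 1"
    using reachable_step[OF assms] gdist_adjacent_neq[OF assms(1) t assms(2)] by linarith
qed

lemma gdist_predecessor:
  assumes "reachable r t" "0 < gdist r t"
  obtains s where "reachable r s" "E s t" "gdist r s + 1 = gdist r t"
proof -
  obtain xs where xs: "walk_in E (X \<union> Y) xs" "hd xs = r" "last xs = t" "length xs = Suc (gdist r t)"
    using geodesic_exists[OF assms(1)] .
  define n where "n = gdist r t - 1"
  have n: "Suc n = gdist r t" "Suc n < length xs" using assms(2) xs(4) unfolding n_def by auto
  moreover have "xs \<noteq> []" using xs(4) by auto
  ultimately have "xs ! Suc n = t" using xs(3,4) last_conv_nth[of xs] by simp
  then have "E (xs ! n) t" using xs(1) n(2) unfolding walk_in_def by metis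
  moreover have "reachable r (xs ! n)" "gdist r (xs ! n) \<le> n"
    using gdist_walk_nth[OF xs(1,2)] n(2) by auto
  moreover have "gdist r t \<le> gdist r (xs ! n) + 1"
    using reachable_step calculation reachable_in_vertices[OF assms(1)] by blast
  ultimately show ?thesis using that n(1) by fastforce
qed

lemma dist_in_eq_gdist:
  assumes "reachable r t"
  shows "dist_in E (X \<union> Y) r t = enat (gdist r t)"
proof (rule order_antisym)
  obtain xs where "walk_in E (X \<union> Y) xs" "hd xs = r" "last xs = t" "length xs = Suc (gdist r t)"
    using geodesic_exists[OF assms] .
  then show "dist_in E (X \<union> Y) r t \<le> enat (gdist r t)" using dist_in_le_walk by fastforce
  show "enat (gdist r t) \<le> dist_in E (X \<union> Y) r t"
    unfolding dist_in_def
  proof (rule INF_greatest)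
    fix xs assume "xs \<in> {xs. walk_in E (X \<union> Y) xs \<and> hd xs = r \<and> last xs = t}"
    then have "gdist r t \<le> length xs - 1" using gdist_le_walk by blast
    then show "enat (gdist r t) \<le> enat (length xs - 1)" by simp
  qed
qed

lemma geodesic_vertex:
  assumes g: "walk_in E (X \<union> Y) g" "hd g = r" "last g = a" "length g = Suc (gdist r a)"
    and "t \<in> set g"
  shows "reachable r t" "gdist r t \<le> gdist r a" "gdist r t = gdist r a \<Longrightarrow> t = a"
proof -
  obtain j where j: "j < length g" "t = g ! j" using assms(5) by (metis in_set_conv_nth)
  then show "reachable r t" and le: "gdist r t \<le> gdist r a"
    using gdist_walk_nth[OF g(1,2) j(1)] g(4) by auto
  assume "gdist r t = gdist r a"
  then have "j = length g - 1" using gdist_walk_nth[OF g(1,2) j(1)] j g(4) by simp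
  moreover have "g \<noteq> []" using g(4) by auto
  ultimately show "t = a" using j(2) g(3) last_conv_nth[of g] by simp
qed

end

section \<open>Pruning bipartite distance-hereditary graphs\<close>

text \<open>An isolated vertex, a pendant vertex, or a vertex with a twin: the vertices that may be
  deleted in a pruning sequence of a distance-hereditary graph.\<close>
definition prunable :: "'a set \<Rightarrow> ('a \<Rightarrow> 'a \<Rightarrow> bool) \<Rightarrow> 'a \<Rightarrow> bool" where
  "prunable V E v \<longleftrightarrow> (\<forall>w\<in>V. \<not> E v w) \<or> (\<exists>y\<in>V. \<forall>w\<in>V. E v w \<longleftrightarrow> w = y)
     \<or> (\<exists>v'\<in>V - {v}. \<forall>w\<in>V. E v w \<longleftrightarrow> E v' w)"

locale bdh_graph = induced_bipartite +
  assumes distance_hereditary: "distance_hereditary (X \<union> Y) E"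
begin

text \<open>Both lemmas below are
  proved by exhibiting a walk W whose vertex set induces a subgraph in which some distance is
  larger than in G, witnessed by a potential that grows by at most one along edges.\<close>

lemma lower_neighbour_shared:
  assumes "reachable r u" "reachable r w" "reachable r z" "reachable r a"
    and du: "gdist r u = i" and dw: "gdist r w = i" and dz: "gdist r z = Suc i" and da: "Suc (gdist r a) = i"
    and "E z u" "E z w" "E a u"
  shows "E a w"
proof (rule ccontr)
  assume "\<not> E a w"
  obtain g where g: "walk_in E (X \<union> Y) g" "hd g = r" "last g = a" "length g = Suc (gdist r a)"
    using geodesic_exists[OF assms(4)] .
  define W where "W = g @ [u, z, w]"
  have walk: "walk_in E (X \<union> Y) W"
    using g assms reachable_in_vertices sym
    by (auto simp: W_def walk_in_iff successively_append_iff)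
  have "g \<noteq> []" using g(4) by auto
  then have r: "r \<in> set W" "r \<in> set g" using g(2) hd_in_set[of g] by (auto simp: W_def)
  have g_below: "reachable r t" "gdist r t \<le> gdist r a" if "t \<in> set g" for t
    using geodesic_vertex[OF g that] by auto
  then have uzw: "u \<notin> set g" "z \<notin> set g" "w \<notin> set g" using du dz dw da by fastforce+
  define \<phi> where "\<phi> t = (if t \<in> set g then int (gdist r t) else if t = u then int i else int i + 1)" for t
  have "\<phi> q \<le> \<phi> p + 1" if q: "q \<in> set W" and pq: "E p q" for p q
  proof (cases "p \<in> set g")
    case False
    then have "int i \<le> \<phi> p" by (simp add: \<phi>_def)
    moreover have "\<phi> q \<le> int i + 1" using g_below(2)[of q] da by (auto simp: \<phi>_def)
    ultimately show ?thesis by simp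
  next
    case True
    then have "q \<in> X \<union> Y" using walk q by (auto simp: walk_in_def)
    then have "gdist r q = gdist r p + 1 \<or> gdist r p = gdist r q + 1"
      using gdist_adjacent(2)[OF g_below(1)[OF True] pq] by blast
    then have adj: "int (gdist r q) \<le> int (gdist r p) + 1" "int (gdist r p) \<le> int (gdist r q) + 1"
      by auto
    have p: "\<phi> p = int (gdist r p)" "gdist r p \<le> gdist r a" using True g_below(2)
      by (auto simp: \<phi>_def)
    consider "q \<in> set g" | "q = u" | "q = z" | "q = w" using q by (auto simp: W_def)
    then show ?thesis
    proof cases
      case 4
      then have "p = a" using geodesic_vertex(3)[OF g True] adj p(2) dw da by simp
      then show ?thesis using \<open>\<not> E a w\<close> pq 4 by simp
    qed (use adj p uzw du dz da in \<open>auto simp: \<phi>_def\<close>)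
  qed
  moreover have "w \<noteq> u" using \<open>E a u\<close> \<open>\<not> E a w\<close> by blast
  then have "\<phi> w - \<phi> r = int (Suc i)"
    using r uzw gdist_self[OF reachable_in_vertices[OF g_below(1)[OF r(2)]]] by (simp add: \<phi>_def)
  ultimately have "enat (Suc i) \<le> dist_in E (set W) r w"
    by (intro dist_in_ge_potential[where \<phi> = \<phi>]) auto
  moreover have "dist_in E (set W) r w = enat i"
    using distance_hereditary_walk_set[OF distance_hereditary walk sym r(1)] dist_in_eq_gdist assms(2) dw
    by (simp add: W_def)
  ultimately show False by simp
qed

lemma lower_neighbourhoods_nested:
  assumes reach: "reachable r v" "reachable r s" "reachable r w1" "reachable r w2" "reachable r a"
    and layers: "gdist r v = k" "gdist r s = k" "gdist r w1 + 1 = k" "gdist r w2 + 1 = k"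
      "gdist r a + 1 = k"
    and "E v w1" "E s w1" "E v w2" "E s a"
  shows "E s w2 \<or> E v a"
proof (rule ccontr)
  assume "\<not> (E s w2 \<or> E v a)"
  then have non_edges: "\<not> E s w2" "\<not> E v a" by auto
  have "gdist r w1 \<noteq> 0"
  proof
    assume "gdist r w1 = 0"
    then have "w1 = r" "w2 = r" using gdist_eq_0 reach(3,4) layers(3,4) by auto
    then show False using \<open>E s w1\<close> non_edges by simp
  qed
  then obtain u where u: "reachable r u" "E u w1" "gdist r u + 1 = gdist r w1"
    using gdist_predecessor[OF reach(3)] by blast
  have "E u w2"
    using lower_neighbour_shared[OF reach(3,4,1) u(1)] layers \<open>E v w1\<close> \<open>E v w2\<close> u sym
    by fastforce
  moreover have "E u a"
    using lower_neighbour_shared[OF reach(3,5,2) u(1)] layers \<open>E s w1\<close> \<open>E s a\<close> u sym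
    by fastforce
  ultimately have walk: "walk_in E (X \<union> Y) [v, w2, u, a, s]"
    using reach u(1) reachable_in_vertices sym \<open>E v w2\<close> \<open>E s a\<close> by (simp add: walk_in_iff)
  have "walk_in E (X \<union> Y) [v, w1, s]"
    using reach reachable_in_vertices sym \<open>E v w1\<close> \<open>E s w1\<close> by (simp add: walk_in_iff)
  from dist_in_le_walk[OF this refl refl] have "dist_in E (X \<union> Y) v s \<le> enat 2"
    by (simp add: numeral_2_eq_2)
  moreover have "dist_in E (set [v, w2, u, a, s]) v s = dist_in E (X \<union> Y) v s"
    using distance_hereditary_walk_set[OF distance_hereditary walk sym] by simp
  moreover have "enat 4 \<le> dist_in E (set [v, w2, u, a, s]) v s"
  proof -
    have layer_u: "gdist r u + 2 = k" using u(3) layers(3) by simp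
    have "\<not> E v u" "\<not> E v s" "\<not> E w2 a" "\<not> E u s"
      using gdist_adjacent(2)[OF reach(1) _ reachable_in_vertices[OF u(1)]]
        gdist_adjacent_neq[OF reach(1,2)] gdist_adjacent_neq[OF reach(4,5)]
        gdist_adjacent(2)[OF u(1) _ reachable_in_vertices[OF reach(2)]] layers layer_u
      by fastforce+
    moreover have "v \<noteq> s" "w2 \<noteq> a" using non_edges \<open>E v w2\<close> by auto
    ultimately have "distinct [v, w2, u, a, s]" "\<not> E w2 s"
      using layers layer_u non_edges sym by auto
    define \<phi> :: "'a \<Rightarrow> int" where
      "\<phi> t = (if t = v then 0 else if t = w2 then 1 else if t = u then 2 else if t = a then 3 else 4)"
      for t
    show ?thesis
    proof (rule dist_in_ge_potential[where \<phi> = \<phi>])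
      fix p q assume "p \<in> set [v, w2, u, a, s]" "q \<in> set [v, w2, u, a, s]" "E p q"
      then show "\<phi> q \<le> \<phi> p + 1"
        using \<open>distinct [v, w2, u, a, s]\<close> \<open>\<not> E w2 s\<close> \<open>\<not> E v u\<close> \<open>\<not> E v s\<close>
          \<open>\<not> E w2 a\<close> \<open>\<not> E u s\<close> non_edges
        by (auto simp: \<phi>_def)
    qed (use \<open>distinct [v, w2, u, a, s]\<close> in \<open>auto simp: \<phi>_def\<close>)
  qed
  ultimately show False using order_trans[of "enat 4" _ "enat 2"] by simp
qed

text \<open>If the neighbour s of w in the last layer missed w', then by the minimality of the degree of v
  it would have a neighbour outside N(v), contradicting nestedness.\<close>
lemma neighbours_twins_at_min_degree:
  assumes top: "\<And>t. reachable r t \<Longrightarrow> gdist r t \<le> k"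
    and v: "reachable r v" "gdist r v = k"
    and min_degree: "\<And>t. reachable r t \<Longrightarrow> gdist r t = k \<Longrightarrow> card (nbhd v) \<le> card (nbhd t)"
    and w: "w \<in> nbhd v" "w' \<in> nbhd v" and s: "s \<in> X \<union> Y" "E w s"
  shows "E w' s"
proof -
  have below_top: "reachable r x \<and> gdist r x + 1 = k"
    if "reachable r t" "gdist r t = k" "x \<in> nbhd t" for t x
  proof -
    have "x \<in> X \<union> Y" "E t x" using that(3) unfolding nbhd_def by auto
    with gdist_adjacent[OF that(1) this(2,1)] top[of x] that(2) show ?thesis by linarith
  qed
  have w_layer: "reachable r w" "gdist r w + 1 = k" "reachable r w'" "gdist r w' + 1 = k"
    using below_top[OF v w(1)] below_top[OF v w(2)] by auto
  have "reachable r s" and s_layer: "gdist r s = gdist r w + 1 \<or> gdist r w = gdist r s + 1"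
    using gdist_adjacent[OF w_layer(1) s(2) s(1)] by auto
  have vw: "E v w" "E v w'" using w unfolding nbhd_def by auto
  show ?thesis
  proof (cases "gdist r w = gdist r s + 1")
    case True
    have "gdist r w' = gdist r w" "gdist r v = Suc (gdist r w)" "Suc (gdist r s) = gdist r w"
      using True w_layer(2,4) v(2) by simp_all
    from lower_neighbour_shared[OF w_layer(1,3) v(1) \<open>reachable r s\<close> refl this vw sym[OF s(2)]]
    have "E s w'" .
    then show ?thesis by (rule sym)
  next
    case False
    then have "gdist r s = k" using s_layer w_layer by simp
    show ?thesis
    proof (rule ccontr)
      assume "\<not> E w' s"
      then have "w' \<notin> nbhd s" using sym[of s w'] unfolding nbhd_def by blast
      moreover have "finite (nbhd v)" using finite_vertices unfolding nbhd_def by simp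
      ultimately have "\<not> nbhd s \<subseteq> nbhd v"
        using psubset_card_mono[of "nbhd v" "nbhd s"] w(2)
          min_degree[OF \<open>reachable r s\<close> \<open>gdist r s = k\<close>] by auto
      then obtain a where a: "a \<in> nbhd s" "\<not> E v a" unfolding nbhd_def by blast
      then have "E s a" unfolding nbhd_def by simp
      have "E s w' \<or> E v a"
        using lower_neighbourhoods_nested[OF v(1) \<open>reachable r s\<close> w_layer(1,3) _ v(2)
            \<open>gdist r s = k\<close> w_layer(2,4) _ vw(1) sym[OF s(2)] vw(2) \<open>E s a\<close>]
          below_top[OF \<open>reachable r s\<close> \<open>gdist r s = k\<close> a(1)] by blast
      then show False using a(2) \<open>\<not> E w' s\<close> sym[of s w'] by blast
    qed
  qed
qed

lemma prunable_vertex_exists: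
  assumes "X \<union> Y \<noteq> {}"
  obtains v where "v \<in> X \<union> Y" "prunable (X \<union> Y) E v"
proof -
  obtain r where r: "r \<in> X \<union> Y" using assms by blast
  define C where "C = {t \<in> X \<union> Y. reachable r t}"
  have "finite C" using finite_vertices unfolding C_def by (rule rev_finite_subset) blast
  moreover have "r \<in> C" unfolding C_def using r reachable_refl by blast
  ultimately have "finite (gdist r ` C)" "gdist r ` C \<noteq> {}" by auto
  define k where "k = Max (gdist r ` C)"
  have top: "gdist r t \<le> k" if "reachable r t" for t
    using \<open>finite (gdist r ` C)\<close> that reachable_in_vertices unfolding C_def k_def by simp
  obtain t0 where t0: "t0 \<in> C" "gdist r t0 = k"
    using Max_in[OF \<open>finite (gdist r ` C)\<close> \<open>gdist r ` C \<noteq> {}\<close>] unfolding k_def by (metis imageE)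
  obtain v where v: "reachable r v" "gdist r v = k"
    and v_min: "\<And>t. reachable r t \<Longrightarrow> gdist r t = k \<Longrightarrow> card (nbhd v) \<le> card (nbhd t)"
    using ex_has_least_nat[of "\<lambda>t. reachable r t \<and> gdist r t = k" t0 "\<lambda>t. card (nbhd t)"] t0
    unfolding C_def by blast
  have twins: "E w s \<longleftrightarrow> E w' s" if "w \<in> nbhd v" "w' \<in> nbhd v" "s \<in> X \<union> Y" for w w' s
    using neighbours_twins_at_min_degree[OF top v v_min] that by blast
  have v_vertex: "v \<in> X \<union> Y" using reachable_in_vertices[OF v(1)] .
  show thesis
  proof (cases "card (nbhd v) \<le> 1")
    case True
    then have unique: "\<forall>y\<in>nbhd v. \<forall>y'\<in>nbhd v. y = y'"
      using card_le_Suc0_iff_eq[OF finite_nbhd] by simp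
    have "prunable (X \<union> Y) E v"
    proof (cases "nbhd v = {}")
      case True
      then have "\<forall>w\<in>X \<union> Y. \<not> E v w" unfolding nbhd_def by blast
      then show ?thesis unfolding prunable_def by blast
    next
      case False
      then obtain y where y: "y \<in> nbhd v" by blast
      then have "\<forall>w\<in>X \<union> Y. E v w \<longleftrightarrow> w = y" using unique unfolding nbhd_def by blast
      moreover have "y \<in> X \<union> Y" using y unfolding nbhd_def by simp
      ultimately show ?thesis unfolding prunable_def by blast
    qed
    with v_vertex that show thesis by blast
  next
    case False
    then obtain w w' where w: "w \<in> nbhd v" "w' \<in> nbhd v" "w \<noteq> w'"
      using card_le_Suc0_iff_eq[OF finite_nbhd] by auto
    then have "w \<in> X \<union> Y" "w' \<in> X \<union> Y - {w}" unfolding nbhd_def by auto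
    moreover have "\<forall>s\<in>X \<union> Y. E w s \<longleftrightarrow> E w' s" using twins w(1,2) by blast
    ultimately have "prunable (X \<union> Y) E w" unfolding prunable_def by blast
    with \<open>w \<in> X \<union> Y\<close> that show thesis by blast
  qed
qed

end

section \<open>Dominance representations in three dimensions\<close>

text \<open>The vertices are placed in \<int> \<times> \<int> \<times> \<int>, injectively in each coordinate, so that the
  pairs comparable in the product order are exactly the edges, with the X-vertex on top. The last
  two assumptions are the extra invariants needed to insert pendant vertices.\<close>
locale repr3 =
  fixes X Y :: "'a set" and E :: "'a \<Rightarrow> 'a \<Rightarrow> bool" and f1 f2 f3 :: "'a \<Rightarrow> int"
  assumes inj1: "inj_on f1 (X \<union> Y)" and inj2: "inj_on f2 (X \<union> Y)" and inj3: "inj_on f3 (X \<union> Y)"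
    and edge_below: "x \<in> X \<Longrightarrow> y \<in> Y \<Longrightarrow> E x y \<Longrightarrow> f1 y < f1 x \<and> f2 y < f2 x \<and> f3 y < f3 x"
    and non_edge_incomparable: "u \<in> X \<union> Y \<Longrightarrow> w \<in> X \<union> Y \<Longrightarrow> u \<noteq> w \<Longrightarrow> \<not> E u w \<Longrightarrow>
      f1 u < f1 w \<or> f2 u < f2 w \<or> f3 u < f3 w"
    and Y_neighbours_below_3: "y \<in> Y \<Longrightarrow> w \<in> X \<union> Y \<Longrightarrow> w \<noteq> y \<Longrightarrow> \<not> E y w \<Longrightarrow>
      f1 w < f1 y \<Longrightarrow> f2 w < f2 y \<Longrightarrow> x \<in> X \<Longrightarrow> E y x \<Longrightarrow> f3 x < f3 w"
    and X_neighbours_above_2: "x \<in> X \<Longrightarrow> w \<in> X \<union> Y \<Longrightarrow> w \<noteq> x \<Longrightarrow> \<not> E x w \<Longrightarrow>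
      f1 x < f1 w \<Longrightarrow> f3 x < f3 w \<Longrightarrow> y \<in> Y \<Longrightarrow> E x y \<Longrightarrow> f2 w < f2 y"

lemma (in repr3) coords_neq:
  "a \<in> X \<union> Y \<Longrightarrow> b \<in> X \<union> Y \<Longrightarrow> a \<noteq> b \<Longrightarrow> f1 a \<noteq> f1 b \<and> f2 a \<noteq> f2 b \<and> f3 a \<noteq> f3 b"
  using inj1 inj2 inj3 unfolding inj_on_def by blast

lemma repr3_empty: "repr3 {} {} E f1 f2 f3"
  by unfold_locales auto

lemma repr3_swap:
  assumes "repr3 X Y E f1 f2 f3" "\<And>u w. E u w \<Longrightarrow> E w u"
  shows "repr3 Y X E (\<lambda>z. - f1 z) (\<lambda>z. - f3 z) (\<lambda>z. - f2 z)"
proof -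
  interpret repr3 X Y E f1 f2 f3 by (rule assms(1))
  have neg_inj: "inj_on (\<lambda>z. - f z) (Y \<union> X)" if "inj_on f (X \<union> Y)" for f :: "'a \<Rightarrow> int"
    using that by (simp add: inj_on_def Un_commute)
  show ?thesis
  proof
    fix u w assume "u \<in> Y \<union> X" "w \<in> Y \<union> X" "u \<noteq> w" "\<not> E u w"
    then show "- f1 u < - f1 w \<or> - f3 u < - f3 w \<or> - f2 u < - f2 w"
      using non_edge_incomparable[of w u] assms(2)[of w u] by auto
  qed (use neg_inj inj1 inj2 inj3 edge_below assms(2) Y_neighbours_below_3 X_neighbours_above_2 in
       \<open>fastforce+\<close>)
qed

lemma repr3_relabel:
  assumes "repr3 X Y E f1 f2 f3" and "strict_mono h1" "strict_mono h2" "strict_mono h3"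
    and "\<forall>z\<in>X \<union> Y. g1 z = h1 (f1 z) \<and> g2 z = h2 (f2 z) \<and> g3 z = h3 (f3 z)"
  shows "repr3 X Y E g1 g2 g3"
proof -
  interpret repr3 X Y E f1 f2 f3 by (rule assms(1))
  have inj: "inj_on g (X \<union> Y)" if "inj_on f (X \<union> Y)" "strict_mono h" "\<forall>z\<in>X \<union> Y. g z = h (f z)"
    for f g and h :: "int \<Rightarrow> int"
    using that strict_mono_eq unfolding inj_on_def by metis
  have less: "(g1 a < g1 b \<longleftrightarrow> f1 a < f1 b) \<and> (g2 a < g2 b \<longleftrightarrow> f2 a < f2 b) \<and> (g3 a < g3 b \<longleftrightarrow> f3 a < f3 b)"
    if "a \<in> X \<union> Y" "b \<in> X \<union> Y" for a b
    using assms(2-5) that by (simp add: strict_mono_less)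
  show ?thesis
  proof
    show "inj_on g1 (X \<union> Y)" "inj_on g2 (X \<union> Y)" "inj_on g3 (X \<union> Y)"
      using inj inj1 inj2 inj3 assms(2-5) by blast+
  next
    fix x y assume "x \<in> X" "y \<in> Y" "E x y"
    then show "g1 y < g1 x \<and> g2 y < g2 x \<and> g3 y < g3 x" using edge_below less by blast
  next
    fix u w assume "u \<in> X \<union> Y" "w \<in> X \<union> Y" "u \<noteq> w" "\<not> E u w"
    then show "g1 u < g1 w \<or> g2 u < g2 w \<or> g3 u < g3 w" using non_edge_incomparable less by blast
  next
    fix y w x assume "y \<in> Y" "w \<in> X \<union> Y" "w \<noteq> y" "\<not> E y w" "g1 w < g1 y" "g2 w < g2 y" "x \<in> X" "E y x"
    then show "g3 x < g3 w" using Y_neighbours_below_3[of y w x] less by blast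
  next
    fix x w y assume "x \<in> X" "w \<in> X \<union> Y" "w \<noteq> x" "\<not> E x w" "g1 x < g1 w" "g3 x < g3 w" "y \<in> Y" "E x y"
    then show "g2 w < g2 y" using X_neighbours_above_2[of x w y] less by blast
  qed
qed

lemma repr3_insert:
  assumes "repr3 X Y E g1 g2 g3" and sym: "\<And>u w. E u w \<Longrightarrow> E w u" and "v \<notin> X \<union> Y"
    and new_inj: "\<And>z. z \<in> X \<union> Y \<Longrightarrow> g1 z \<noteq> g1 v \<and> g2 z \<noteq> g2 v \<and> g3 z \<noteq> g3 v"
    and new_edge: "\<And>y. y \<in> Y \<Longrightarrow> E v y \<Longrightarrow> g1 y < g1 v \<and> g2 y < g2 v \<and> g3 y < g3 v"
    and new_non_edge: "\<And>w. w \<in> X \<union> Y \<Longrightarrow> \<not> E v w \<Longrightarrow>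
      (g1 v < g1 w \<or> g2 v < g2 w \<or> g3 v < g3 w) \<and> (g1 w < g1 v \<or> g2 w < g2 v \<or> g3 w < g3 v)"
    and new_Y_below: "\<And>y x. y \<in> Y \<Longrightarrow> \<not> E y v \<Longrightarrow> g1 v < g1 y \<Longrightarrow> g2 v < g2 y \<Longrightarrow>
      x \<in> X \<Longrightarrow> E y x \<Longrightarrow> g3 x < g3 v"
    and new_Y_neighbour: "\<And>y w. y \<in> Y \<Longrightarrow> E y v \<Longrightarrow> w \<in> X \<union> Y \<Longrightarrow> w \<noteq> y \<Longrightarrow> \<not> E y w \<Longrightarrow>
      g1 w < g1 y \<Longrightarrow> g2 w < g2 y \<Longrightarrow> g3 v < g3 w"
    and new_X_above: "\<And>w y. w \<in> X \<union> Y \<Longrightarrow> \<not> E v w \<Longrightarrow> g1 v < g1 w \<Longrightarrow> g3 v < g3 w \<Longrightarrow>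
      y \<in> Y \<Longrightarrow> E v y \<Longrightarrow> g2 w < g2 y"
    and new_X_neighbour: "\<And>x y. x \<in> X \<Longrightarrow> \<not> E x v \<Longrightarrow> g1 x < g1 v \<Longrightarrow> g3 x < g3 v \<Longrightarrow>
      y \<in> Y \<Longrightarrow> E x y \<Longrightarrow> g2 v < g2 y"
  shows "repr3 (insert v X) Y E g1 g2 g3"
proof -
  interpret repr3 X Y E g1 g2 g3 by (rule assms(1))
  have V: "insert v X \<union> Y = insert v (X \<union> Y)" by simp
  show ?thesis
  proof
    show "inj_on g1 (insert v X \<union> Y)" "inj_on g2 (insert v X \<union> Y)" "inj_on g3 (insert v X \<union> Y)"
    proof -
      have "g1 v \<notin> g1 ` (X \<union> Y)" "g2 v \<notin> g2 ` (X \<union> Y)" "g3 v \<notin> g3 ` (X \<union> Y)"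
        using new_inj by (metis imageE)+
      then show "inj_on g1 (insert v X \<union> Y)" "inj_on g2 (insert v X \<union> Y)" "inj_on g3 (insert v X \<union> Y)"
        unfolding V using inj1 inj2 inj3 \<open>v \<notin> X \<union> Y\<close> by (simp_all add: inj_on_insert)
    qed
  next
    fix x y assume "x \<in> insert v X" "y \<in> Y" "E x y"
    then show "g1 y < g1 x \<and> g2 y < g2 x \<and> g3 y < g3 x" using edge_below new_edge by blast
  next
    fix u w assume "u \<in> insert v X \<union> Y" "w \<in> insert v X \<union> Y" "u \<noteq> w" "\<not> E u w"
    then show "g1 u < g1 w \<or> g2 u < g2 w \<or> g3 u < g3 w"
      using non_edge_incomparable new_non_edge[of u] new_non_edge[of w] sym[of v u] by auto
  next
    fix y w x assume "y \<in> Y" "w \<in> insert v X \<union> Y" "w \<noteq> y" "\<not> E y w" "g1 w < g1 y" "g2 w < g2 y"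
      "x \<in> insert v X" "E y x"
    then show "g3 x < g3 w"
      using Y_neighbours_below_3[of y w x] new_Y_below[of y x] new_Y_neighbour[of y w] by auto
  next
    fix x w y assume "x \<in> insert v X" "w \<in> insert v X \<union> Y" "w \<noteq> x" "\<not> E x w" "g1 x < g1 w"
      "g3 x < g3 w" "y \<in> Y" "E x y"
    then show "g2 w < g2 y"
      using X_neighbours_above_2[of x w y] new_X_above[of w y] new_X_neighbour[of x y] by auto
  qed
qed

locale vertex_insertion = induced_bipartite "insert v X" Y E
  for v :: 'a and X Y :: "'a set" and E :: "'a \<Rightarrow> 'a \<Rightarrow> bool" +
  assumes new_vertex: "v \<notin> X \<union> Y"
begin

lemma X_independent: "a \<in> insert v X \<Longrightarrow> b \<in> insert v X \<Longrightarrow> \<not> E a b"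
  using edge_between disjoint by blast

lemma Y_independent: "a \<in> Y \<Longrightarrow> b \<in> Y \<Longrightarrow> \<not> E a b"
  using edge_between disjoint by blast

lemma repr3_insert_isolated:
  assumes repr: "repr3 X Y E f1 f2 f3" and isolated: "\<And>y. y \<in> Y \<Longrightarrow> \<not> E v y"
  shows "\<exists>g1 g2 g3. repr3 (insert v X) Y E g1 g2 g3"
proof -
  define S where "S = (\<lambda>z. \<bar>f1 z\<bar> + \<bar>f2 z\<bar> + \<bar>f3 z\<bar>) ` (X \<union> Y)"
  define B where "B = Max (insert 0 S) + 1"
  have "finite S" using finite_vertices unfolding S_def by simp
  have sum: "\<bar>f1 z\<bar> + \<bar>f2 z\<bar> + \<bar>f3 z\<bar> < B" if "z \<in> X \<union> Y" for z
  proof -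
    have "\<bar>f1 z\<bar> + \<bar>f2 z\<bar> + \<bar>f3 z\<bar> \<le> Max (insert 0 S)"
      using \<open>finite S\<close> that unfolding S_def by (intro Max_ge) auto
    then show ?thesis unfolding B_def by simp
  qed
  have B: "- B < f1 z" "f2 z < B" "- B < f3 z" if "z \<in> X \<union> Y" for z
    using sum[OF that] by (smt (verit))+
  define g1 where "g1 = f1(v := - B)"
  define g2 where "g2 = f2(v := B)"
  define g3 where "g3 = f3(v := - B)"
  have gv: "g1 v = - B" "g2 v = B" "g3 v = - B" unfolding g1_def g2_def g3_def by simp_all
  have gz: "g1 z = f1 z" "g2 z = f2 z" "g3 z = f3 z" if "z \<in> X \<union> Y" for z
    using new_vertex that unfolding g1_def g2_def g3_def by auto
  have "repr3 X Y E g1 g2 g3" using repr3_relabel[OF repr strict_mono_id strict_mono_id strict_mono_id] gz by simp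
  have "repr3 (insert v X) Y E g1 g2 g3"
  proof (rule repr3_insert[OF \<open>repr3 X Y E g1 g2 g3\<close> sym new_vertex])
    fix z assume "z \<in> X \<union> Y"
    then show "g1 z \<noteq> g1 v \<and> g2 z \<noteq> g2 v \<and> g3 z \<noteq> g3 v" using B[of z] gz[of z] gv by simp
  next
    fix w assume "w \<in> X \<union> Y"
    then show "(g1 v < g1 w \<or> g2 v < g2 w \<or> g3 v < g3 w) \<and> (g1 w < g1 v \<or> g2 w < g2 v \<or> g3 w < g3 v)"
      using B[of w] gz[of w] gv by simp
  next
    fix y x assume "y \<in> Y" "\<not> E y v" "g1 v < g1 y" "g2 v < g2 y" "x \<in> X" "E y x"
    then show "g3 x < g3 v" using B[of y] gz[of y] gv by simp
  next
    fix x y assume "x \<in> X" "\<not> E x v" "g1 x < g1 v" "g3 x < g3 v" "y \<in> Y" "E x y"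
    then show "g2 v < g2 y" using B[of x] gz[of x] gv by simp
  qed (use isolated sym in blast)+
  then show ?thesis by blast
qed

text \<open>The new twin v is placed just below v' in the first two coordinates and just above it
  in the third, after doubling all coordinates to make room.\<close>
lemma repr3_insert_twin:
  assumes repr: "repr3 X Y E f1 f2 f3" and "v' \<in> X" and twin: "\<And>y. y \<in> Y \<Longrightarrow> E v y \<longleftrightarrow> E v' y"
  shows "\<exists>g1 g2 g3. repr3 (insert v X) Y E g1 g2 g3"
proof -
  interpret f: repr3 X Y E f1 f2 f3 by (rule repr)
  define g1 where "g1 = (\<lambda>z. 2 * f1 z)(v := 2 * f1 v' - 1)"
  define g2 where "g2 = (\<lambda>z. 2 * f2 z)(v := 2 * f2 v' - 1)"
  define g3 where "g3 = (\<lambda>z. 2 * f3 z)(v := 2 * f3 v' + 1)"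
  have gv: "g1 v = 2 * f1 v' - 1" "g2 v = 2 * f2 v' - 1" "g3 v = 2 * f3 v' + 1"
    unfolding g1_def g2_def g3_def by simp_all
  have gz: "g1 z = 2 * f1 z" "g2 z = 2 * f2 z" "g3 z = 2 * f3 z" if "z \<in> X \<union> Y" for z
    using new_vertex that unfolding g1_def g2_def g3_def by auto
  have v'_vertex: "v' \<in> X \<union> Y" using \<open>v' \<in> X\<close> by simp
  have cmp: "(g1 v < g1 z \<longleftrightarrow> f1 v' < f1 z) \<and> (g1 z < g1 v \<longleftrightarrow> f1 z < f1 v') \<and>
      (g2 v < g2 z \<longleftrightarrow> f2 v' < f2 z) \<and> (g2 z < g2 v \<longleftrightarrow> f2 z < f2 v') \<and>
      (g3 v < g3 z \<longleftrightarrow> f3 v' < f3 z) \<and> (g3 z < g3 v \<longleftrightarrow> f3 z < f3 v')"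
    if "z \<in> X \<union> Y" "z \<noteq> v'" for z
    using f.coords_neq[OF that(1) v'_vertex that(2)] gz[OF that(1)] gv by auto
  have twin': "E v w \<longleftrightarrow> E v' w" "E w v \<longleftrightarrow> E w v'" if "w \<in> X \<union> Y" for w
    using that twin[of w] X_independent[of v w] X_independent[of v' w] \<open>v' \<in> X\<close>
      sym[of v w] sym[of w v] sym[of v' w] sym[of w v'] by auto
  have "repr3 X Y E g1 g2 g3"
    using repr3_relabel[OF repr, of "(*) 2" "(*) 2" "(*) 2"] gz by (simp add: strict_mono_def)
  have "repr3 (insert v X) Y E g1 g2 g3"
  proof (rule repr3_insert[OF \<open>repr3 X Y E g1 g2 g3\<close> sym new_vertex])
    fix z assume "z \<in> X \<union> Y"
    then show "g1 z \<noteq> g1 v \<and> g2 z \<noteq> g2 v \<and> g3 z \<noteq> g3 v" using gz[of z] gv by presburger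
  next
    fix y assume "y \<in> Y" "E v y"
    then show "g1 y < g1 v \<and> g2 y < g2 v \<and> g3 y < g3 v"
      using f.edge_below[OF \<open>v' \<in> X\<close>, of y] twin gz[of y] gv by auto
  next
    fix w assume w: "w \<in> X \<union> Y" "\<not> E v w"
    show "(g1 v < g1 w \<or> g2 v < g2 w \<or> g3 v < g3 w) \<and> (g1 w < g1 v \<or> g2 w < g2 v \<or> g3 w < g3 v)"
    proof (cases "w = v'")
      case True
      then show ?thesis using gz[OF v'_vertex] gv by simp
    next
      case False
      then show ?thesis
        using f.non_edge_incomparable[OF v'_vertex w(1)] f.non_edge_incomparable[OF w(1) v'_vertex]
          cmp[OF w(1)] twin'[OF w(1)] w(2) sym[of w v'] by auto
    qed
  next
    fix y x assume "y \<in> Y" "\<not> E y v" "g1 v < g1 y" "g2 v < g2 y" "x \<in> X" "E y x"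
    moreover have "y \<noteq> v'" using \<open>y \<in> Y\<close> \<open>v' \<in> X\<close> disjoint by auto
    ultimately show "g3 x < g3 v"
      using f.Y_neighbours_below_3[of y v' x] v'_vertex cmp[of y] twin'[of y] gz[of x] gv by auto
  next
    fix y w assume "y \<in> Y" "E y v" "w \<in> X \<union> Y" "w \<noteq> y" "\<not> E y w" "g1 w < g1 y" "g2 w < g2 y"
    then show "g3 v < g3 w"
      using f.Y_neighbours_below_3[of y w v'] \<open>v' \<in> X\<close> twin'[of y] gz[of w] gz[of y] gv by auto
  next
    fix w y assume "w \<in> X \<union> Y" "\<not> E v w" "g1 v < g1 w" "g3 v < g3 w" "y \<in> Y" "E v y"
    moreover have "w \<noteq> v'" using \<open>g3 v < g3 w\<close> gz[OF v'_vertex] gv by auto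
    ultimately show "g2 w < g2 y"
      using f.X_neighbours_above_2[of v' w y] \<open>v' \<in> X\<close> cmp[of w] twin'[of w] twin[of y] gz[of w] gz[of y]
      by auto
  next
    fix x y assume "x \<in> X" "\<not> E x v" "g1 x < g1 v" "g3 x < g3 v" "y \<in> Y" "E x y"
    moreover have "x \<noteq> v'" using \<open>g1 x < g1 v\<close> gz[OF v'_vertex] gv by auto
    ultimately show "g2 v < g2 y"
      using f.X_neighbours_above_2[of x v' y] v'_vertex cmp[of x] X_independent[of x v'] \<open>v' \<in> X\<close>
        gz[of y] gv by auto
  qed
  then show ?thesis by blast
qed

end

text \<open>A pendant v with neighbour y is placed just above the slot (f1 y, f2 y, f3 m), where m
  maximises the third coordinate among y and its neighbours.\<close>
locale pendant_insertion = vertex_insertion v X Y E + repr3 X Y E f1 f2 f3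
  for v X Y E f1 f2 f3 +
  fixes y m :: 'a
  assumes y_in_Y: "y \<in> Y"
    and top: "m = y \<or> (m \<in> X \<and> E y m)"
    and top_max: "\<And>x. x \<in> X \<Longrightarrow> E y x \<Longrightarrow> f3 x \<le> f3 m" "f3 y \<le> f3 m"
begin

lemma y_vertex: "y \<in> X \<union> Y"
  using y_in_Y by simp

lemma neighbour_of_y: "w \<in> X \<union> Y \<Longrightarrow> E y w \<Longrightarrow> w \<in> X"
  using y_in_Y Y_independent by blast

lemma slot_not_above:
  assumes w: "w \<in> X \<union> Y" "w \<noteq> y"
  shows "f1 y < f1 w \<or> f2 y < f2 w \<or> f3 m < f3 w"
proof (cases "E y w")
  case True
  then show ?thesis using edge_below[OF neighbour_of_y[OF w(1) True] y_in_Y] sym[of y w] by blast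
next
  case False
  show ?thesis
  proof (rule ccontr)
    assume contra: "\<not> ?thesis"
    then have "f1 w < f1 y" "f2 w < f2 y" "f3 w \<le> f3 m" using coords_neq[OF w(1) y_vertex w(2)] by auto
    then have "f3 x < f3 w" if "x \<in> X" "E y x" for x
      using Y_neighbours_below_3[OF y_in_Y w False] that by blast
    moreover have "f3 y < f3 w"
      using non_edge_incomparable[OF y_vertex w(1)] w(2) False contra by auto
    ultimately show False using top \<open>f3 w \<le> f3 m\<close> by force
  qed
qed

lemma slot_not_below:
  assumes w: "w \<in> X \<union> Y" "w \<noteq> y"
  shows "f1 w < f1 y \<or> f2 w < f2 y \<or> f3 w \<le> f3 m"
proof (cases "E y w")
  case True
  then show ?thesis using top_max(1) neighbour_of_y[OF w(1) True] by simp
next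
  case False
  then have "\<not> E w y" using sym[of w y] by blast
  then show ?thesis using non_edge_incomparable[OF w(1) y_vertex] w(2) top_max(2) by auto
qed

lemma slot_below_X_neighbours:
  assumes x: "x \<in> X" "f1 x < f1 y" "f3 x \<le> f3 m" and y': "y' \<in> Y" "E x y'"
  shows "f2 y < f2 y'"
proof -
  have "x \<noteq> y" "\<not> E x y" using x(2) edge_below[OF x(1) y_in_Y] by auto
  then have "y' \<noteq> y" using y'(2) by blast
  show ?thesis
  proof (cases "f3 x < f3 y")
    case True
    then show ?thesis
      using X_neighbours_above_2[OF x(1) y_vertex] \<open>x \<noteq> y\<close> \<open>\<not> E x y\<close> x(2) y' by metis
  next
    case False
    then have "f3 y < f3 x" using coords_neq[of x y] x(1) y_vertex \<open>x \<noteq> y\<close> by auto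
    then have "m \<in> X" "E y m" using top x(3) by auto
    show ?thesis
    proof (rule ccontr)
      assume "\<not> ?thesis"
      then have "f2 y' < f2 y" using coords_neq[of y' y] y'(1) y_vertex \<open>y' \<noteq> y\<close> by auto
      moreover have "f1 y' < f1 x" "f3 y' < f3 x" using edge_below[OF x(1) y'] by auto
      ultimately have "f3 m < f3 y'"
        using Y_neighbours_below_3[OF y_in_Y _ \<open>y' \<noteq> y\<close> _ _ _ \<open>m \<in> X\<close> \<open>E y m\<close>]
          Y_independent[OF y_in_Y y'(1)] y'(1) x(2) by simp
      then show False using \<open>f3 y' < f3 x\<close> x(3) by simp
    qed
  qed
qed

end

context vertex_insertion
begin

lemma repr3_insert_pendant:
  assumes repr: "repr3 X Y E f1 f2 f3" and "y \<in> Y" and pendant: "\<And>w. w \<in> Y \<Longrightarrow> E v w \<longleftrightarrow> w = y"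
  shows "\<exists>g1 g2 g3. repr3 (insert v X) Y E g1 g2 g3"
proof -
  define S where "S = insert y {x \<in> X. E y x}"
  have "finite S"
    using finite_vertices unfolding S_def by (rule rev_finite_subset) (use \<open>y \<in> Y\<close> in blast)
  then have "finite (f3 ` S)" "f3 ` S \<noteq> {}" unfolding S_def by auto
  then obtain m where "m \<in> S" "f3 m = Max (f3 ` S)" using Max_in by (metis imageE)
  moreover have "f3 t \<le> f3 m" if "t \<in> S" for t
    using Max_ge[OF \<open>finite (f3 ` S)\<close>] that calculation(2) by simp
  ultimately interpret pendant_insertion v X Y E f1 f2 f3 y m
    using repr \<open>y \<in> Y\<close> unfolding S_def
    by (intro pendant_insertion.intro vertex_insertion_axioms pendant_insertion_axioms.intro)
      (auto simp: vertex_insertion_def)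
  define g1 where "g1 = (\<lambda>z. 2 * f1 z)(v := 2 * f1 y + 1)"
  define g2 where "g2 = (\<lambda>z. 2 * f2 z)(v := 2 * f2 y + 1)"
  define g3 where "g3 = (\<lambda>z. 2 * f3 z)(v := 2 * f3 m + 1)"
  have gv: "g1 v = 2 * f1 y + 1" "g2 v = 2 * f2 y + 1" "g3 v = 2 * f3 m + 1"
    unfolding g1_def g2_def g3_def by simp_all
  have gz: "g1 z = 2 * f1 z" "g2 z = 2 * f2 z" "g3 z = 2 * f3 z" if "z \<in> X \<union> Y" for z
    using new_vertex that unfolding g1_def g2_def g3_def by auto
  have "E v y" "E y v" using pendant[OF \<open>y \<in> Y\<close>] sym[of v y] by auto
  have "repr3 X Y E g1 g2 g3"
    using repr3_relabel[OF repr, of "(*) 2" "(*) 2" "(*) 2"] gz by (simp add: strict_mono_def)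
  have "repr3 (insert v X) Y E g1 g2 g3"
  proof (rule repr3_insert[OF \<open>repr3 X Y E g1 g2 g3\<close> sym new_vertex])
    fix z assume "z \<in> X \<union> Y"
    then show "g1 z \<noteq> g1 v \<and> g2 z \<noteq> g2 v \<and> g3 z \<noteq> g3 v" using gz[of z] gv by presburger
  next
    fix y' assume "y' \<in> Y" "E v y'"
    then show "g1 y' < g1 v \<and> g2 y' < g2 v \<and> g3 y' < g3 v" using pendant top_max(2) gz[OF y_vertex] gv by auto
  next
    fix w assume "w \<in> X \<union> Y" "\<not> E v w"
    moreover from this have "w \<noteq> y" using \<open>E v y\<close> by blast
    ultimately show "(g1 v < g1 w \<or> g2 v < g2 w \<or> g3 v < g3 w) \<and> (g1 w < g1 v \<or> g2 w < g2 v \<or> g3 w < g3 v)"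
      using slot_not_above slot_not_below gz[of w] gv by fastforce
  next
    fix y' x assume "y' \<in> Y" "\<not> E y' v" "g1 v < g1 y'" "g2 v < g2 y'" "x \<in> X" "E y' x"
    moreover from this have "y' \<noteq> y" using \<open>E y v\<close> by blast
    ultimately show "g3 x < g3 v"
      using Y_neighbours_below_3[of y' y x] y_vertex Y_independent[of y' y] \<open>y \<in> Y\<close> top_max(2)
        gz[of y'] gz[of x] gv by auto
  next
    fix y' w assume "y' \<in> Y" "E y' v" "w \<in> X \<union> Y" "w \<noteq> y'" "\<not> E y' w" "g1 w < g1 y'" "g2 w < g2 y'"
    moreover from this have "y' = y" using pendant sym[of y' v] by blast
    ultimately show "g3 v < g3 w" using slot_not_above[of w] gz[of w] gz[of y] gv by auto
  next
    fix w y' assume "w \<in> X \<union> Y" "\<not> E v w" "g1 v < g1 w" "g3 v < g3 w" "y' \<in> Y" "E v y'"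
    moreover from this have "y' = y" "w \<noteq> y" using pendant \<open>E v y\<close> by blast+
    ultimately show "g2 w < g2 y'" using slot_not_below[of w] gz[of w] gz[of y] gv by auto
  next
    fix x y' assume "x \<in> X" "\<not> E x v" "g1 x < g1 v" "g3 x < g3 v" "y' \<in> Y" "E x y'"
    moreover have "x \<noteq> y" using \<open>x \<in> X\<close> \<open>y \<in> Y\<close> disjoint by auto
    ultimately show "g2 v < g2 y'"
      using slot_below_X_neighbours[of x y'] coords_neq[of x y] y_vertex gz[of x] gz[of y'] gv by fastforce
  qed
  then show ?thesis by blast
qed

end

section \<open>Existence of the representation\<close>

context induced_bipartite
begin

lemma induced_bipartite_swap: "induced_bipartite Y X E"
  using finite_vertices disjoint sym edge_between by unfold_locales blast+

lemma induced_bipartite_subset: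
  assumes "X' \<subseteq> X" "Y' \<subseteq> Y"
  shows "induced_bipartite X' Y' E"
proof
  show "finite (X' \<union> Y')" using finite_vertices by (rule rev_finite_subset) (use assms in blast)
  fix u w assume "u \<in> X' \<union> Y'" "w \<in> X' \<union> Y'" "E u w"
  then show "u \<in> X' \<and> w \<in> Y' \<or> u \<in> Y' \<and> w \<in> X'"
    using edge_between[of u w] disjoint assms by blast
qed (use disjoint assms sym in blast)+

end

lemma repr3_insert_prunable:
  assumes "induced_bipartite X Y E" and "v \<in> X" and prunable: "prunable (X \<union> Y) E v"
    and repr: "repr3 (X - {v}) Y E f1 f2 f3"
  shows "\<exists>g1 g2 g3. repr3 X Y E g1 g2 g3"
proof -
  have X: "insert v (X - {v}) = X" using \<open>v \<in> X\<close> by blast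
  interpret vertex_insertion v "X - {v}" Y E
  proof (rule vertex_insertion.intro)
    show "induced_bipartite (insert v (X - {v})) Y E" unfolding X by (rule assms(1))
    show "vertex_insertion_axioms v (X - {v}) Y"
      using \<open>v \<in> X\<close> induced_bipartite.disjoint[OF assms(1)] unfolding vertex_insertion_axioms_def by blast
  qed
  have neighbour_Y: "w \<in> Y" if "w \<in> X \<union> Y" "E v w" for w
    using induced_bipartite.edge_between[OF assms(1) _ that(1,2)] \<open>v \<in> X\<close> disjoint by blast
  consider "\<forall>w\<in>X \<union> Y. \<not> E v w" | y where "y \<in> X \<union> Y" "\<forall>w\<in>X \<union> Y. E v w \<longleftrightarrow> w = y"
    | v' w0 where "v' \<in> X \<union> Y - {v}" "\<forall>w\<in>X \<union> Y. E v w \<longleftrightarrow> E v' w" "w0 \<in> X \<union> Y" "E v w0"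
    using prunable unfolding prunable_def by blast
  then have "\<exists>g1 g2 g3. repr3 (insert v (X - {v})) Y E g1 g2 g3"
  proof cases
    case 1
    then show ?thesis using repr3_insert_isolated[OF repr] by blast
  next
    case (2 y)
    then have "y \<in> Y" using neighbour_Y by blast
    with 2 show ?thesis using repr3_insert_pendant[OF repr] by blast
  next
    case (3 v' w0)
    then have "v' \<in> X - {v}"
      using induced_bipartite.edge_between[OF assms(1), of v' w0] neighbour_Y disjoint by blast
    with 3 show ?thesis using repr3_insert_twin[OF repr] by blast
  qed
  then show ?thesis unfolding X .
qed

lemma bdh_graph_if_BDH: "BDH X Y E \<Longrightarrow> bdh_graph X Y E"
  unfolding BDH_def bipartite_graph_def simple_graph_def
  by (auto intro!: bdh_graph.intro induced_bipartite.intro simp: bdh_graph_axioms_def)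

lemma repr3_exists: "bdh_graph X Y E \<Longrightarrow> \<exists>f1 f2 f3. repr3 X Y E f1 f2 f3"
proof (induction "card (X \<union> Y)" arbitrary: X Y rule: less_induct)
  case less
  interpret bdh_graph X Y E by (rule less.prems)
  show ?case
  proof (cases "X \<union> Y = {}")
    case True
    then show ?thesis using repr3_empty by blast
  next
    case False
    then obtain v where v: "v \<in> X \<union> Y" "prunable (X \<union> Y) E v" by (rule prunable_vertex_exists)
    have IH: "\<exists>f1 f2 f3. repr3 X' Y' E f1 f2 f3" if "X' \<subseteq> X" "Y' \<subseteq> Y" "v \<notin> X' \<union> Y'" for X' Y'
    proof (rule less.hyps)
      show "card (X' \<union> Y') < card (X \<union> Y)"
        using that v(1) finite_vertices by (intro psubset_card_mono) auto
      have "distance_hereditary (X' \<union> Y') E"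
        by (rule distance_hereditary_subset[OF distance_hereditary]) (use that in blast)
      then show "bdh_graph X' Y' E"
        using induced_bipartite_subset[OF that(1,2)] by (simp add: bdh_graph_def bdh_graph_axioms_def)
    qed
    show ?thesis
    proof (cases "v \<in> X")
      case True
      then have "v \<notin> (X - {v}) \<union> Y" using disjoint by blast
      then obtain f1 f2 f3 where "repr3 (X - {v}) Y E f1 f2 f3" using IH[of "X - {v}" Y] by blast
      then show ?thesis by (rule repr3_insert_prunable[OF induced_bipartite_axioms True v(2)])
    next
      case False
      then have "v \<in> Y" using v(1) by blast
      obtain f1 f2 f3 where "repr3 X (Y - {v}) E f1 f2 f3" using IH[of X "Y - {v}"] False by auto
      from repr3_swap[OF this sym] have "repr3 (Y - {v}) X E (\<lambda>z. - f1 z) (\<lambda>z. - f3 z) (\<lambda>z. - f2 z)" .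
      moreover have "prunable (Y \<union> X) E v" using v(2) by (simp add: Un_commute)
      ultimately obtain g1 g2 g3 where "repr3 Y X E g1 g2 g3"
        using repr3_insert_prunable[OF induced_bipartite_swap \<open>v \<in> Y\<close>] by meson
      from repr3_swap[OF this sym] show ?thesis by blast
    qed
  qed
qed

theorem corollary4:
  fixes X Y :: "'a set" and E :: "'a \<Rightarrow> 'a \<Rightarrow> bool"
  assumes "BDH X Y E"
    and "\<not> has_universal_vertex X Y E"
  shows "order_dimension (max_bicliques X Y E) (biclique_order X Y E) \<le> 3"
proof -
  interpret bdh_graph X Y E using assms(1) by (rule bdh_graph_if_BDH)
  obtain f1 f2 f3 where "repr3 X Y E f1 f2 f3" using repr3_exists bdh_graph_axioms by blast
  then interpret repr3 X Y E f1 f2 f3 .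
  have "order_dimension (max_bicliques X Y E) (biclique_order X Y E) \<le> length [f1, f2, f3]"
  proof (rule order_dimension_le_rankings[OF finite_vertices disjoint])
    show "\<And>f x y. f \<in> set [f1, f2, f3] \<Longrightarrow> x \<in> X \<Longrightarrow> y \<in> Y \<Longrightarrow> E x y \<Longrightarrow> f y < f x"
      using edge_below by auto
    show "\<exists>f\<in>set [f1, f2, f3]. f x < f y" if "x \<in> X" "y \<in> Y" "\<not> E x y" for x y
      using non_edge_incomparable[of x y] that disjoint by auto
  qed simp
  then show ?thesis by simp
qed

end
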